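(* Let $g$ be a positive integer. There exists a large set of H-designs LH$(7,g,4,3)$ if and only if $g$ is even.
   Context: An H-design H$(n,g,k,t)$ is a triple $(Q,G,B)$ where $Q$ is a set of $ng$ points, $G$ is a partition of $Q$ into $n$ groups of size $g$, and $B$ is a set of $k$-subsets of $Q$ (blocks) such that each block meets each group in at most one point and any $t$ points from $t$ distinct groups lie in exactly one block. A large set of H-designs LH$(n,g,k,t)$ is a partition of the set of all $k$-subsets of $Q$ meeting each group of $G$ in at most one point into pairwise disjoint block sets, each of which forms (with $Q$ and $G$) an H-design H$(n,g,k,t)$. *)

theory Defs
  imports Main
begin

definition transversal :: "'a set set \<Rightarrow> 'a set \<Rightarrow> bool" where
  "transversal G S \<longleftrightarrow> (\<forall>X\<in>G. card (S \<inter> X) \<le> 1)"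

definition trans_ksets :: "'a set \<Rightarrow> 'a set set \<Rightarrow> nat \<Rightarrow> 'a set set" where
  "trans_ksets Q G k = {S. S \<subseteq> Q \<and> card S = k \<and> transversal G S}"

definition group_partition :: "'a set \<Rightarrow> 'a set set \<Rightarrow> nat \<Rightarrow> nat \<Rightarrow> bool" where
  "group_partition Q G n g \<longleftrightarrow>
     \<Union>G = Q \<and> card G = n \<and> finite G \<and>
     (\<forall>X\<in>G. X \<noteq> {} \<and> finite X \<and> card X = g) \<and>
     (\<forall>X\<in>G. \<forall>Y\<in>G. X \<noteq> Y \<longrightarrow> X \<inter> Y = {})"

definition H_design :: "nat \<Rightarrow> nat \<Rightarrow> nat \<Rightarrow> nat \<Rightarrow> 'a set \<Rightarrow> 'a set set \<Rightarrow> 'a set set \<Rightarrow> bool" where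
  "H_design n g k t Q G B \<longleftrightarrow>
     finite Q \<and> card Q = n * g \<and> group_partition Q G n g \<and>
     B \<subseteq> trans_ksets Q G k \<and>
     (\<forall>T \<in> trans_ksets Q G t. \<exists>!b. b \<in> B \<and> T \<subseteq> b)"

definition large_H_set :: "nat \<Rightarrow> nat \<Rightarrow> nat \<Rightarrow> nat \<Rightarrow> 'a set \<Rightarrow> 'a set set \<Rightarrow> 'a set set set \<Rightarrow> bool" where
  "large_H_set n g k t Q G L \<longleftrightarrow>
     finite Q \<and> card Q = n * g \<and> group_partition Q G n g \<and>
     \<Union>L = trans_ksets Q G k \<and>
     (\<forall>B1\<in>L. \<forall>B2\<in>L. B1 \<noteq> B2 \<longrightarrow> B1 \<inter> B2 = {}) \<and>
     (\<forall>B\<in>L. H_design n g k t Q G B)"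

end

theory Submission
  imports Defs "HOL-Number_Theory.Cong"
begin

text \<open>Necessity: in an H(n,g,4,3) fix a transversal pair P. Every point whose group misses P lies,
  together with P, in exactly one block, and every block through P contains exactly two such points;
  so the (n-2)g points whose groups miss P come in pairs.

  Sufficiency for g = 2m: start from a large set LH(7,2,4,3), found by computer and encoded as a
  colouring of the transversal 4-subsets of 14 points with 8 colours such that the 8 one-point
  extensions of any transversal triple get 8 different colours. Replace every point by m copies and
  colour a 4-set by the colour of its projection together with the sum of its copy numbers mod m.
  For a transversal triple, the first component of the colour of an extension determines the
  projected new point and the second one its copy, so each of the 8m colour classes is an
  H(7,2m,4,3).\<close>

definition free_points :: "'a set \<Rightarrow> 'a set set \<Rightarrow> 'a set \<Rightarrow> 'a set" where
  "free_points Q G T = {p \<in> Q. \<forall>X\<in>G. p \<in> X \<longrightarrow> X \<inter> T = {}}"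

lemma group_partitionD:
  assumes "group_partition Q G n g"
  shows "\<Union>G = Q" "finite G" "card G = n" "\<And>X. X \<in> G \<Longrightarrow> finite X"
    "\<And>X. X \<in> G \<Longrightarrow> card X = g" "pairwise disjnt G"
  using assms unfolding group_partition_def pairwise_def disjnt_def by simp_all

lemma group_partition_finite_card:
  assumes "group_partition Q G n g"
  shows "finite Q" and "card Q = n * g"
proof -
  note G = group_partitionD[OF assms]
  show "finite Q" using finite_Union[OF G(2)] G(1,4) by simp
  have "card Q = (\<Sum>X\<in>G. card X)"
    using card_Union_disjoint[OF G(6)] G(1,4) by simp
  then show "card Q = n * g" using G(3,5) by simp
qed

lemma transversal_iff:
  assumes "finite S"
  shows "transversal G S \<longleftrightarrow> (\<forall>X\<in>G. \<forall>p\<in>S \<inter> X. \<forall>q\<in>S \<inter> X. p = q)"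
  using assms unfolding transversal_def by (auto simp: card_le_Suc0_iff_eq)

lemma trans_ksets_finite:
  assumes "group_partition Q G n g" "S \<in> trans_ksets Q G k"
  shows "finite S"
proof (rule finite_subset)
  show "S \<subseteq> Q" using assms(2) unfolding trans_ksets_def by simp
qed (rule group_partition_finite_card(1)[OF assms(1)])

lemma free_point_notin:
  assumes "group_partition Q G n g" "p \<in> free_points Q G T"
  shows "p \<notin> T"
proof -
  have p: "p \<in> Q" "\<forall>X\<in>G. p \<in> X \<longrightarrow> X \<inter> T = {}"
    using assms(2) unfolding free_points_def by simp_all
  then obtain X where "X \<in> G" "p \<in> X" using group_partitionD(1)[OF assms(1)] by blast
  then show ?thesis using p(2) by blast
qed

lemma insert_free_point_in_trans_ksets:
  assumes gp: "group_partition Q G n g" and T: "T \<in> trans_ksets Q G t"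
    and p: "p \<in> free_points Q G T"
  shows "insert p T \<in> trans_ksets Q G (Suc t)"
proof -
  have fin: "finite T" using trans_ksets_finite[OF gp T] .
  have finp: "finite (insert p T)" using fin by simp
  have T': "transversal G T" "card T = t" "T \<subseteq> Q" using T unfolding trans_ksets_def by simp_all
  have p': "p \<notin> T" "p \<in> Q" "\<forall>X\<in>G. p \<in> X \<longrightarrow> X \<inter> T = {}"
    using free_point_notin[OF gp p] p unfolding free_points_def by simp_all
  have "\<forall>X\<in>G. \<forall>a\<in>insert p T \<inter> X. \<forall>b\<in>insert p T \<inter> X. a = b"
  proof (intro ballI)
    fix X a b assume "X \<in> G" "a \<in> insert p T \<inter> X" "b \<in> insert p T \<inter> X"
    then show "a = b"
      using T'(1) p'(3) unfolding transversal_iff[OF fin] by blast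
  qed
  then have "transversal G (insert p T)" unfolding transversal_iff[OF finp] .
  then show ?thesis using T' p' fin unfolding trans_ksets_def by simp
qed

lemma trans_ksets_Suc_supsetE:
  assumes gp: "group_partition Q G n g" and T: "T \<in> trans_ksets Q G t"
    and b: "b \<in> trans_ksets Q G (Suc t)" "T \<subseteq> b"
  obtains p where "p \<in> free_points Q G T" "b = insert p T"
proof -
  have fin: "finite b" "finite T" using trans_ksets_finite gp T b(1) by blast+
  have "card (b - T) = 1"
    using b T fin unfolding trans_ksets_def by (simp add: card_Diff_subset)
  then obtain p where p: "b - T = {p}" by (rule card_1_singletonE)
  have "p \<in> Q" "transversal G b" using p b(1) unfolding trans_ksets_def by auto
  have "X \<inter> T = {}" if "X \<in> G" "p \<in> X" for X
  proof (rule ccontr)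
    assume "X \<inter> T \<noteq> {}"
    then obtain q where "q \<in> X" "q \<in> T" by blast
    then have "p = q"
      using \<open>transversal G b\<close> that p b(2) unfolding transversal_iff[OF fin(1)] by blast
    then show False using p \<open>q \<in> T\<close> by blast
  qed
  then have "p \<in> free_points Q G T" using \<open>p \<in> Q\<close> unfolding free_points_def by blast
  moreover have "b = insert p T" using p b(2) by blast
  ultimately show thesis using that by blast
qed

lemma trans_ksets_SucE:
  assumes gp: "group_partition Q G n g" and b: "b \<in> trans_ksets Q G (Suc t)"
  obtains T p where "T \<in> trans_ksets Q G t" "p \<in> free_points Q G T" "b = insert p T"
proof -
  have fin: "finite b" using trans_ksets_finite[OF gp b] .
  have b': "b \<subseteq> Q" "card b = Suc t" "transversal G b" using b unfolding trans_ksets_def by simp_all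
  then obtain p where "p \<in> b" by fastforce
  have "transversal G (b - {p})"
    using b'(3) unfolding transversal_iff[OF fin] transversal_iff[OF finite_Diff[OF fin]] by blast
  then have T: "b - {p} \<in> trans_ksets Q G t"
    using b' fin \<open>p \<in> b\<close> unfolding trans_ksets_def by auto
  then show thesis using trans_ksets_Suc_supsetE[OF gp T b] that by blast
qed

lemma card_free_points:
  assumes gp: "group_partition Q G n g" and T: "T \<in> trans_ksets Q G t"
  shows "card (free_points Q G T) = (n - t) * g"
proof -
  note G = group_partitionD[OF gp]
  have fin: "finite T" using trans_ksets_finite[OF gp T] .
  have T': "transversal G T" "card T = t" "T \<subseteq> Q" using T unfolding trans_ksets_def by simp_all
  define M where "M = {X \<in> G. X \<inter> T \<noteq> {}}"
  have M: "finite M" "M \<subseteq> G" using G(2) unfolding M_def by simp_all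
  have one: "card (X \<inter> T) = 1" if "X \<in> M" for X
  proof -
    have "card (T \<inter> X) \<le> 1" using that T'(1) unfolding M_def transversal_def by simp
    moreover have "T \<inter> X \<noteq> {}" using that unfolding M_def by blast
    ultimately show ?thesis using fin by (simp add: Int_commute le_Suc_eq)
  qed
  have "T = (\<Union>X\<in>M. X \<inter> T)" using T'(3) G(1) unfolding M_def by blast
  moreover have "\<forall>X\<in>M. \<forall>Y\<in>M. X \<noteq> Y \<longrightarrow> (X \<inter> T) \<inter> (Y \<inter> T) = {}"
    using G(6) M(2) unfolding pairwise_def disjnt_def by blast
  ultimately have "t = (\<Sum>X\<in>M. card (X \<inter> T))"
    using card_UN_disjoint[OF M(1), of "\<lambda>X. X \<inter> T"] fin T'(2) by simp
  then have cM: "card M = t" using one by simp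
  have "card (\<Union>M) = (\<Sum>X\<in>M. card X)"
    using card_Union_disjoint[of M] pairwise_subset[OF G(6) M(2)] G(4) M(2) by blast
  also have "\<dots> = t * g" using M(2) G(5) cM by (simp add: subset_iff)
  finally have cU: "card (\<Union>M) = t * g" .
  have "free_points Q G T = Q - \<Union>M" unfolding free_points_def M_def by blast
  moreover have "\<Union>M \<subseteq> Q" using M(2) G(1) by blast
  ultimately show ?thesis
    using cU group_partition_finite_card[OF gp]
    by (simp add: card_Diff_subset diff_mult_distrib finite_subset)
qed

lemma trans_ksets_nonempty:
  assumes gp: "group_partition Q G n g" and "0 < g" "k \<le> n"
  shows "trans_ksets Q G k \<noteq> {}"
  using \<open>k \<le> n\<close>
proof (induction k)
  case 0
  have "{} \<in> trans_ksets Q G 0" unfolding trans_ksets_def transversal_def by simp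
  then show ?case by blast
next
  case (Suc k)
  then obtain T where T: "T \<in> trans_ksets Q G k" by auto
  have "card (free_points Q G T) \<noteq> 0"
    using card_free_points[OF gp T] \<open>0 < g\<close> \<open>Suc k \<le> n\<close> by simp
  then obtain p where "p \<in> free_points Q G T" by fastforce
  then show ?case using insert_free_point_in_trans_ksets[OF gp T] by blast
qed

lemma H_design_free_points_eq:
  assumes H: "H_design n g (Suc (Suc t)) (Suc t) Q G B" and P: "P \<in> trans_ksets Q G t"
  shows "free_points Q G P = (\<Union>b\<in>{b \<in> B. P \<subseteq> b}. b - P)"
proof (intro equalityI subsetI)
  have gp: "group_partition Q G n g" and B: "B \<subseteq> trans_ksets Q G (Suc (Suc t))"
    and unique: "\<And>T. T \<in> trans_ksets Q G (Suc t) \<Longrightarrow> \<exists>!b. b \<in> B \<and> T \<subseteq> b"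
    using H unfolding H_design_def by simp_all
  {
    fix c assume c: "c \<in> free_points Q G P"
    obtain b where "b \<in> B" "insert c P \<subseteq> b"
      using unique[OF insert_free_point_in_trans_ksets[OF gp P c]] by blast
    then show "c \<in> (\<Union>b\<in>{b \<in> B. P \<subseteq> b}. b - P)" using free_point_notin[OF gp c] by blast
  next
    fix c assume "c \<in> (\<Union>b\<in>{b \<in> B. P \<subseteq> b}. b - P)"
    then obtain b where b: "b \<in> B" "P \<subseteq> b" "c \<in> b" "c \<notin> P" by blast
    then have "b \<in> trans_ksets Q G (Suc (Suc t))" using B by blast
    then have "finite b" "c \<in> Q" "transversal G b"
      using trans_ksets_finite[OF gp] b(3) unfolding trans_ksets_def by blast+
    have "X \<inter> P = {}" if "X \<in> G" "c \<in> X" for X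
    proof (rule ccontr)
      assume "X \<inter> P \<noteq> {}"
      then obtain q where "q \<in> X" "q \<in> P" by blast
      then have "c = q"
        using \<open>transversal G b\<close> that b unfolding transversal_iff[OF \<open>finite b\<close>] by blast
      then show False using b(4) \<open>q \<in> P\<close> by blast
    qed
    then show "c \<in> free_points Q G P" using \<open>c \<in> Q\<close> unfolding free_points_def by blast
  }
qed

lemma H_design_even_free_points:
  assumes H: "H_design n g (Suc (Suc t)) (Suc t) Q G B" and P: "P \<in> trans_ksets Q G t"
  shows "even (card (free_points Q G P))"
proof -
  have gp: "group_partition Q G n g" and B: "B \<subseteq> trans_ksets Q G (Suc (Suc t))"
    and unique: "\<And>T. T \<in> trans_ksets Q G (Suc t) \<Longrightarrow> \<exists>!b. b \<in> B \<and> T \<subseteq> b"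
    using H unfolding H_design_def by simp_all
  define BP where "BP = {b \<in> B. P \<subseteq> b}"
  note free = H_design_free_points_eq[OF H P, folded BP_def]
  have fin: "finite b" if "b \<in> B" for b using trans_ksets_finite[OF gp] B that by blast
  have "finite BP"
  proof (rule finite_subset)
    show "BP \<subseteq> Pow Q" using B unfolding BP_def trans_ksets_def by blast
  qed (simp add: group_partition_finite_card(1)[OF gp])
  moreover have "(b1 - P) \<inter> (b2 - P) = {}" if "b1 \<in> BP" "b2 \<in> BP" "b1 \<noteq> b2" for b1 b2
  proof (rule ccontr)
    assume "(b1 - P) \<inter> (b2 - P) \<noteq> {}"
    then obtain c where c: "c \<in> b1" "c \<in> b2" "c \<notin> P" by blast
    then have "c \<in> free_points Q G P" using free that(1) by blast
    then show False
      using unique[OF insert_free_point_in_trans_ksets[OF gp P]] that c unfolding BP_def by blast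
  qed
  ultimately have "card (free_points Q G P) = (\<Sum>b\<in>BP. card (b - P))"
    unfolding free using fin unfolding BP_def by (intro card_UN_disjoint) auto
  also have "\<dots> = (\<Sum>b\<in>BP. 2)"
  proof (rule sum.cong)
    fix b assume "b \<in> BP"
    then have "b \<in> B" "P \<subseteq> b" unfolding BP_def by simp_all
    then have "card b = Suc (Suc t)" using B unfolding trans_ksets_def by blast
    moreover have "card P = t" using P unfolding trans_ksets_def by simp
    ultimately show "card (b - P) = 2"
      using \<open>P \<subseteq> b\<close> fin[OF \<open>b \<in> B\<close>] by (simp add: card_Diff_subset finite_subset)
  qed simp
  finally show ?thesis by simp
qed

lemma large_H_set_4_3_even:
  assumes L: "large_H_set n g 4 3 Q G L" and "0 < g" "4 \<le> n"
  shows "even ((n - 2) * g)"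
proof -
  have gp: "group_partition Q G n g" and UL: "\<Union>L = trans_ksets Q G 4"
    and designs: "\<forall>B\<in>L. H_design n g 4 3 Q G B"
    using L unfolding large_H_set_def by simp_all
  obtain B where "B \<in> L" using UL trans_ksets_nonempty[OF gp \<open>0 < g\<close> \<open>4 \<le> n\<close>] by blast
  then have H: "H_design n g (Suc (Suc 2)) (Suc 2) Q G B"
    using designs by (simp add: eval_nat_numeral)
  obtain P where P: "P \<in> trans_ksets Q G 2"
    using trans_ksets_nonempty[OF gp \<open>0 < g\<close>, of 2] \<open>4 \<le> n\<close> by fastforce
  show ?thesis using H_design_even_free_points[OF H P] card_free_points[OF gp P] by simp
qed

lemma large_H_set_colour_classes:
  assumes gp: "group_partition Q G n g"
    and bij: "\<And>T. T \<in> trans_ksets Q G t \<Longrightarrow>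
      bij_betw (\<lambda>p. col (insert p T)) (free_points Q G T) D"
  shows "large_H_set n g (Suc t) t Q G ((\<lambda>d. {b \<in> trans_ksets Q G (Suc t). col b = d}) ` D)"
proof -
  let ?class = "\<lambda>d. {b \<in> trans_ksets Q G (Suc t). col b = d}"
  have colour_in: "col b \<in> D" if b: "b \<in> trans_ksets Q G (Suc t)" for b
  proof -
    obtain T p where "T \<in> trans_ksets Q G t" "p \<in> free_points Q G T" "b = insert p T"
      using trans_ksets_SucE[OF gp b] .
    then show ?thesis using bij_betwE[OF bij] by blast
  qed
  have "H_design n g (Suc t) t Q G (?class d)" if "d \<in> D" for d
  proof -
    have "\<exists>!b. b \<in> ?class d \<and> T \<subseteq> b" if T: "T \<in> trans_ksets Q G t" for T
    proof -
      from bij[OF T] have inj: "inj_on (\<lambda>p. col (insert p T)) (free_points Q G T)"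
        and surj: "(\<lambda>p. col (insert p T)) ` free_points Q G T = D"
        unfolding bij_betw_def by simp_all
      obtain p where p: "p \<in> free_points Q G T" "col (insert p T) = d"
        using surj \<open>d \<in> D\<close> by blast
      show ?thesis
      proof (rule ex1I)
        show "insert p T \<in> ?class d \<and> T \<subseteq> insert p T"
          using insert_free_point_in_trans_ksets[OF gp T p(1)] p(2) by blast
      next
        fix b assume b: "b \<in> ?class d \<and> T \<subseteq> b"
        then obtain q where q: "q \<in> free_points Q G T" "b = insert q T"
          using trans_ksets_Suc_supsetE[OF gp T] by blast
        then have "q = p" using inj_onD[OF inj _ q(1) p(1)] b p(2) by simp
        then show "b = insert p T" using q(2) by simp
      qed
    qed
    then show ?thesis
      unfolding H_design_def using gp group_partition_finite_card[OF gp] by auto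
  qed
  moreover have "\<Union>(?class ` D) = trans_ksets Q G (Suc t)" using colour_in by blast
  ultimately show ?thesis
    unfolding large_H_set_def using gp group_partition_finite_card[OF gp] by auto
qed

section \<open>Residue classes as groups\<close>

definition residue_class :: "nat \<Rightarrow> nat \<Rightarrow> nat \<Rightarrow> nat set" where
  "residue_class n g i = {p. p < n * g \<and> p mod n = i}"

definition residue_groups :: "nat \<Rightarrow> nat \<Rightarrow> nat set set" where
  "residue_groups n g = residue_class n g ` {..<n}"

lemma mem_residue_class [simp]: "p \<in> residue_class n g i \<longleftrightarrow> p < n * g \<and> p mod n = i"
  unfolding residue_class_def by simp

lemma residue_class_eq:
  assumes "i < n"
  shows "residue_class n g i = (\<lambda>j. i + n * j) ` {..<g}"
proof (intro equalityI subsetI)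
  fix p assume "p \<in> residue_class n g i"
  then have "p = i + n * (p div n)" "p div n < g"
    using mod_mult_div_eq[of p n] less_mult_imp_div_less[of p g n] by (simp_all add: mult.commute)
  then show "p \<in> (\<lambda>j. i + n * j) ` {..<g}" by blast
next
  fix p assume "p \<in> (\<lambda>j. i + n * j) ` {..<g}"
  then obtain j where "j < g" "p = i + n * j" by blast
  moreover have "i + n * j < n * Suc j" using assms by simp
  then have "i + n * j < n * g"
    using \<open>j < g\<close> mult_le_mono2[of "Suc j" g n] by linarith
  ultimately show "p \<in> residue_class n g i" using assms by simp
qed

lemma residue_class_in_residue_groups:
  "p < n * g \<Longrightarrow> residue_class n g (p mod n) \<in> residue_groups n g"
  unfolding residue_groups_def by (cases n) simp_all

lemma group_partition_residue_groups:
  assumes "0 < g"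
  shows "group_partition {..<n * g} (residue_groups n g) n g"
proof -
  have self: "i \<in> residue_class n g i" if "i < n" for i
  proof -
    have "n \<le> n * g" using assms by simp
    then show ?thesis using less_le_trans[OF that] by simp
  qed
  have "\<Union>(residue_groups n g) = {..<n * g}"
  proof (intro equalityI subsetI)
    fix p assume "p \<in> {..<n * g}"
    then have "p \<in> residue_class n g (p mod n)" "residue_class n g (p mod n) \<in> residue_groups n g"
      using residue_class_in_residue_groups[of p n g] by simp_all
    then show "p \<in> \<Union>(residue_groups n g)" by blast
  qed (auto simp: residue_groups_def)
  moreover have "inj_on (residue_class n g) {..<n}"
  proof (rule inj_onI)
    fix i j assume "i \<in> {..<n}" "j \<in> {..<n}" "residue_class n g i = residue_class n g j"
    then have "i \<in> residue_class n g j" using self by blast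
    then show "i = j" using \<open>i \<in> {..<n}\<close> by simp
  qed
  then have "card (residue_groups n g) = n"
    unfolding residue_groups_def by (simp add: card_image)
  moreover have "finite (residue_groups n g)" unfolding residue_groups_def by simp
  moreover have "\<forall>X\<in>residue_groups n g. X \<noteq> {} \<and> finite X \<and> card X = g"
  proof
    fix X assume "X \<in> residue_groups n g"
    then obtain i where i: "i < n" "X = residue_class n g i" unfolding residue_groups_def by blast
    have "inj_on (\<lambda>j. i + n * j) {..<g}" using i(1) by (simp add: inj_on_def)
    then show "X \<noteq> {} \<and> finite X \<and> card X = g"
      using self[OF i(1)] assms unfolding i(2) residue_class_eq[OF i(1)]
      by (simp add: card_image lessThan_empty_iff)
  qed
  moreover have "\<forall>X\<in>residue_groups n g. \<forall>Y\<in>residue_groups n g. X \<noteq> Y \<longrightarrow> X \<inter> Y = {}"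
    unfolding residue_groups_def by auto
  ultimately show ?thesis unfolding group_partition_def by simp
qed

lemma transversal_residue_groups_iff:
  assumes "S \<subseteq> {..<n * g}"
  shows "transversal (residue_groups n g) S \<longleftrightarrow> inj_on (\<lambda>p. p mod n) S"
proof
  have fin: "finite S" using finite_subset[OF assms] by simp
  show "inj_on (\<lambda>p. p mod n) S" if tr: "transversal (residue_groups n g) S"
  proof (rule inj_onI)
    fix p q assume pq: "p \<in> S" "q \<in> S" "p mod n = q mod n"
    have "p < n * g" "q < n * g" using subsetD[OF assms pq(1)] subsetD[OF assms pq(2)] by simp_all
    then have "p \<in> S \<inter> residue_class n g (p mod n)" "q \<in> S \<inter> residue_class n g (p mod n)"
      using pq by simp_all
    then show "p = q"
      using tr residue_class_in_residue_groups[OF \<open>p < n * g\<close>]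
      unfolding transversal_iff[OF fin] by blast
  qed
  show "transversal (residue_groups n g) S" if inj: "inj_on (\<lambda>p. p mod n) S"
    unfolding transversal_iff[OF fin]
  proof (intro ballI)
    fix X p q assume X: "X \<in> residue_groups n g" and pq: "p \<in> S \<inter> X" "q \<in> S \<inter> X"
    obtain i where "X = residue_class n g i" using X unfolding residue_groups_def by blast
    then have "p mod n = q mod n" using pq by simp
    then show "p = q" using inj_onD[OF inj] pq by simp
  qed
qed

lemma free_points_residue_groups:
  assumes "T \<subseteq> {..<n * g}"
  shows "free_points {..<n * g} (residue_groups n g) T
    = {p. p < n * g \<and> p mod n \<notin> (\<lambda>q. q mod n) ` T}"
proof (intro equalityI subsetI)
  fix p assume p: "p \<in> free_points {..<n * g} (residue_groups n g) T"
  then have "p < n * g" unfolding free_points_def by simp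
  then have "residue_class n g (p mod n) \<inter> T = {}"
    using p residue_class_in_residue_groups unfolding free_points_def by simp
  moreover have "p mod n \<notin> (\<lambda>q. q mod n) ` T"
  proof
    assume "p mod n \<in> (\<lambda>q. q mod n) ` T"
    then obtain q where "q \<in> T" "q mod n = p mod n" by auto
    then have "q \<in> residue_class n g (p mod n) \<inter> T" using subsetD[OF assms] by simp
    then show False using calculation by blast
  qed
  ultimately show "p \<in> {p. p < n * g \<and> p mod n \<notin> (\<lambda>q. q mod n) ` T}"
    using \<open>p < n * g\<close> by simp
next
  fix p assume p: "p \<in> {p. p < n * g \<and> p mod n \<notin> (\<lambda>q. q mod n) ` T}"
  have "X \<inter> T = {}" if X: "X \<in> residue_groups n g" "p \<in> X" for X
  proof -
    obtain i where "X = residue_class n g i" using X(1) unfolding residue_groups_def by blast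
    then show ?thesis using p X(2) by (auto simp: image_iff)
  qed
  then show "p \<in> free_points {..<n * g} (residue_groups n g) T"
    using p unfolding free_points_def by simp
qed

section \<open>Inflating a colouring\<close>

lemma bij_betw_add_mod: "bij_betw (\<lambda>c. (c + s) mod m) {..<m} {..<m::nat}"
proof -
  have "inj_on (\<lambda>c. (c + s) mod m) {..<m}"
    by (intro inj_onI) (simp add: cong_add_rcancel_nat[unfolded cong_def])
  then show ?thesis
    by (simp add: bij_betw_def endo_inj_surj image_subset_iff)
qed

lemma bij_betw_mod_div:
  fixes n N m :: nat
  assumes "n dvd N"
  shows "bij_betw (\<lambda>p. (p mod N, p div N))
    {p. p < N * m \<and> p mod n \<notin> R} ({q. q < N \<and> q mod n \<notin> R} \<times> {..<m})"
proof (rule bij_betw_byWitness[where f' = "\<lambda>(q, c). q + N * c"])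
  have mod_N: "p mod N mod n = p mod n" for p using assms by (rule mod_mod_cancel)
  obtain k where N: "N = n * k" using assms by blast
  have mod_n: "(q + N * c) mod n = q mod n" for q c unfolding N by (simp add: mult.assoc)
  show "(\<lambda>p. (p mod N, p div N)) ` {p. p < N * m \<and> p mod n \<notin> R} \<subseteq> {q. q < N \<and> q mod n \<notin> R} \<times> {..<m}"
  proof
    fix x assume "x \<in> (\<lambda>p. (p mod N, p div N)) ` {p. p < N * m \<and> p mod n \<notin> R}"
    then obtain p where p: "x = (p mod N, p div N)" "p < N * m" "p mod n \<notin> R" by blast
    then have "0 < N" by (cases N) simp_all
    then show "x \<in> {q. q < N \<and> q mod n \<notin> R} \<times> {..<m}"
      using p mod_N less_mult_imp_div_less[of p m N] by (simp add: mult.commute)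
  qed
  show "(\<lambda>(q, c). q + N * c) ` ({q. q < N \<and> q mod n \<notin> R} \<times> {..<m}) \<subseteq> {p. p < N * m \<and> p mod n \<notin> R}"
  proof
    fix y assume "y \<in> (\<lambda>(q, c). q + N * c) ` ({q. q < N \<and> q mod n \<notin> R} \<times> {..<m})"
    then obtain q c where y: "y = q + N * c" "q < N" "q mod n \<notin> R" "c < m" by auto
    have "q + N * c < N * Suc c" using y(2) by simp
    then have "q + N * c < N * m" using y(4) mult_le_mono2[of "Suc c" m N] by linarith
    then show "y \<in> {p. p < N * m \<and> p mod n \<notin> R}" using y mod_n by simp
  qed
  show "\<forall>p\<in>{p. p < N * m \<and> p mod n \<notin> R}. (\<lambda>(q, c). q + N * c) (p mod N, p div N) = p"
    by (simp add: mod_mult_div_eq)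
  show "\<forall>x\<in>{q. q < N \<and> q mod n \<notin> R} \<times> {..<m}. (\<lambda>p. (p mod N, p div N)) ((\<lambda>(q, c). q + N * c) x) = x"
    by auto
qed

lemma trans_ksets_residue_groups_mod:
  assumes T: "T \<in> trans_ksets {..<n * (h * m)} (residue_groups n (h * m)) t"
  shows "(\<lambda>p. p mod (n * h)) ` T \<in> trans_ksets {..<n * h} (residue_groups n h) t"
proof -
  have mod_N: "p mod (n * h) mod n = p mod n" for p by (simp add: mod_mod_cancel)
  have T': "T \<subseteq> {..<n * (h * m)}" "card T = t" "inj_on (\<lambda>p. p mod n) T"
    using T transversal_residue_groups_iff[of T n "h * m"] unfolding trans_ksets_def by auto
  have "inj_on (\<lambda>p. p mod (n * h)) T"
    using T'(3) mod_N unfolding inj_on_def by metis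
  then have "card ((\<lambda>p. p mod (n * h)) ` T) = t" using T'(2) by (simp add: card_image)
  moreover have "inj_on (\<lambda>q. q mod n) ((\<lambda>p. p mod (n * h)) ` T)"
    using T'(3) mod_N by (intro inj_on_imageI) (simp add: comp_def)
  moreover have "(\<lambda>p. p mod (n * h)) ` T \<subseteq> {..<n * h}"
  proof
    fix q assume "q \<in> (\<lambda>p. p mod (n * h)) ` T"
    then obtain p where "p \<in> T" "q = p mod (n * h)" by blast
    then have "0 < n * h" using T'(1) by (cases "n * h") auto
    then show "q \<in> {..<n * h}" using \<open>q = p mod (n * h)\<close> by simp
  qed
  ultimately show ?thesis
    using transversal_residue_groups_iff[of "(\<lambda>p. p mod (n * h)) ` T" n h]
    unfolding trans_ksets_def by simp
qed

text \<open>Point p of {..<N * m} is copy number p div N of the point p mod N of {..<N}.\<close>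

definition inflated_colouring :: "nat \<Rightarrow> nat \<Rightarrow> (nat set \<Rightarrow> 'c) \<Rightarrow> nat set \<Rightarrow> 'c \<times> nat" where
  "inflated_colouring N m \<kappa> S = (\<kappa> ((\<lambda>p. p mod N) ` S), (\<Sum>p\<in>S. p div N) mod m)"

lemma inflated_colouring_bij:
  assumes base: "\<And>T. T \<in> trans_ksets {..<n * h} (residue_groups n h) t \<Longrightarrow>
      bij_betw (\<lambda>q. \<kappa> (insert q T)) (free_points {..<n * h} (residue_groups n h) T) D"
    and T: "T \<in> trans_ksets {..<n * (h * m)} (residue_groups n (h * m)) t"
  shows "bij_betw (\<lambda>p. inflated_colouring (n * h) m \<kappa> (insert p T))
    (free_points {..<n * (h * m)} (residue_groups n (h * m)) T) (D \<times> {..<m})"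
proof -
  define N where "N = n * h"
  have "n dvd N" unfolding N_def by simp
  then have mod_N: "p mod N mod n = p mod n" for p by (rule mod_mod_cancel)
  have "n * (h * m) = N * m" unfolding N_def by simp
  then have T': "T \<subseteq> {..<N * m}" "finite T"
    using T finite_subset unfolding trans_ksets_def by auto
  define T0 where "T0 = (\<lambda>p. p mod N) ` T"
  have T0: "T0 \<in> trans_ksets {..<n * h} (residue_groups n h) t"
    using trans_ksets_residue_groups_mod[OF T] unfolding T0_def N_def .
  have residues: "(\<lambda>q. q mod n) ` T0 = (\<lambda>q. q mod n) ` T"
    unfolding T0_def image_image mod_N ..
  have "T0 \<subseteq> {..<N}" using T0 unfolding trans_ksets_def N_def by simp
  define s where "s = (\<Sum>p\<in>T. p div N)"
  have free: "free_points {..<n * (h * m)} (residue_groups n (h * m)) T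
      = {p. p < N * m \<and> p mod n \<notin> (\<lambda>q. q mod n) ` T}"
    using free_points_residue_groups[of T n "h * m"] T'(1)
    unfolding \<open>n * (h * m) = N * m\<close> by simp
  have free0: "free_points {..<N} (residue_groups n h) T0
      = {q. q < N \<and> q mod n \<notin> (\<lambda>q. q mod n) ` T}"
    using free_points_residue_groups[of T0 n h] \<open>T0 \<subseteq> {..<N}\<close> residues unfolding N_def by simp
  have colour: "inflated_colouring N m \<kappa> (insert p T) = (\<kappa> (insert (p mod N) T0), (p div N + s) mod m)"
    if "p mod n \<notin> (\<lambda>q. q mod n) ` T" for p
  proof -
    have "p \<notin> T" using that by blast
    then show ?thesis unfolding inflated_colouring_def T0_def s_def using T'(2) by simp
  qed
  have "bij_betw (map_prod (\<lambda>q. \<kappa> (insert q T0)) (\<lambda>c. (c + s) mod m) \<circ> (\<lambda>p. (p mod N, p div N)))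
      {p. p < N * m \<and> p mod n \<notin> (\<lambda>q. q mod n) ` T} (D \<times> {..<m})"
    using bij_betw_mod_div[OF \<open>n dvd N\<close>]
      bij_betw_map_prod[OF base[OF T0, folded N_def, unfolded free0] bij_betw_add_mod]
    by (rule bij_betw_trans)
  then show ?thesis
    unfolding free N_def[symmetric]
    by (rule bij_betw_cong[THEN iffD1, rotated]) (simp add: colour)
qed

section \<open>A large set LH(7,2,4,3)\<close>

text \<open>The groups of {..<14} are the residue classes mod 7. A computer search produced a
  partition of the transversal 4-subsets into eight H(7,2,4,3); the 4-set S lies in design number
  base_colour_code (\<Sum>p\<in>S. 2 ^ p). Outside such codes the values are irrelevant.\<close>

definition base_colour_code :: "nat \<Rightarrow> nat" where
  "base_colour_code n = (if n < 4103 then (if n < 1093 then (if n < 340 then (if n < 120 then (if n < 75 then (if n < 46 then (if n < 30 then (if n < 27 then (if n < 23 then 0 else 2) else (if n < 29 then 3 else 6)) else (if n < 43 then (if n < 39 then 7 else 4) else (if n < 45 then 2 else 5))) else (if n < 57 then (if n < 53 then (if n < 51 then 1 else 0) else (if n < 54 then 7 else 6)) else (if n < 60 then (if n < 58 then 1 else 5) else (if n < 71 then 3 else 6)))) else (if n < 99 then (if n < 85 then (if n < 78 then (if n < 77 then 7 else 2) else (if n < 83 then 3 else 4)) else (if n < 90 then (if n < 86 then 1 else 5) else (if n < 92 then 1 else 0))) else (if n < 106 then (if n < 102 then (if n < 101 then 1 else 3) else (if n < 105 then 2 else 0)) else (if n < 113 then (if n < 108 then 4 else 7) else (if n < 114 then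 6 else (if n < 116 then 7 else 4)))))) else (if n < 216 then (if n < 178 then (if n < 156 then (if n < 150 then (if n < 142 then 2 else 6) else (if n < 154 then 3 else 4)) else (if n < 170 then (if n < 166 then 2 else 7) else (if n < 172 then 3 else 4))) else (if n < 202 then (if n < 184 then (if n < 180 then 1 else 5) else (if n < 198 then 0 else 1)) else (if n < 210 then (if n < 204 then 2 else 5) else (if n < 212 then 0 else 6)))) else (if n < 293 then (if n < 240 then (if n < 228 then (if n < 226 then 7 else 5) else (if n < 232 then 0 else 6)) else (if n < 281 then (if n < 277 then 3 else 5) else (if n < 284 then 2 else 4))) else (if n < 308 then (if n < 300 then (if n < 297 then 2 else 6) else (if n < 305 then 0 else 4)) else (if n < 329 then (if n < 312 then 1 else 7) else (if n < 332 then 4 else (if n < 337 then 1 else 3))))))) else (if n < 616 then (if n < 531 then (if n < 408 then (if n < 360 then (if n < 353 then (if n < 344 then 2 else 6) else (if n < 356 then 5 else 6)) else (if n < 396 then (if n < 368 then 3 else 0) else (if n < 404 then 7 else 0))) else (if n < 452 then (if n < 424 then (if n < 420 then 1 else 3) else (if n < 432 then 5 else 2)) else (if n < 464 then (if n < 456 then 4 else 0) else (if n < 480 then 5 else 1)))) else (if n < 568 then (if n < 553 then (if n < 538 then (if n < 537 then 6 else 7) else (if n < 547 then 0 else 3)) else (if n < 561 then (if n < 554 then 4 else 7) else (if n < 562 then 5 else 2))) else (if n < 593 then (if n < 585 then (if n < 579 then 6 else 5) else (if n < 586 then 3 else 6)) else (if n < 600 then (if n < 594 then 0 else 3) else (if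 n < 609 then 4 else (if n < 610 then 2 else 0)))))) else (if n < 833 then (if n < 712 then (if n < 664 then (if n < 650 then (if n < 624 then 5 else 1) else (if n < 658 then 5 else 7)) else (if n < 680 then (if n < 674 then 3 else 6) else (if n < 688 then 2 else 4))) else (if n < 785 then (if n < 736 then (if n < 720 then 1 else 2) else (if n < 777 then 7 else 0)) else (if n < 801 then (if n < 792 then 1 else 5) else (if n < 808 then 7 else (if n < 816 then 1 else 3))))) else (if n < 1043 then (if n < 912 then (if n < 848 then (if n < 840 then 6 else 2) else (if n < 864 then 7 else 4)) else (if n < 960 then (if n < 928 then 6 else 0) else (if n < 1031 then 3 else 1))) else (if n < 1061 then (if n < 1046 then (if n < 1045 then 5 else 4) else (if n < 1059 then 0 else 7)) else (if n < 1074 then (if n < 1062 then 0 else 3) else (if n < 1076 then 4 else (if n < 1091 then 2 else 0)))))))) else (if n < 2146 then (if n < 1553 then (if n < 1232 then (if n < 1136 then (if n < 1108 then (if n < 1105 then (if n < 1094 then 5 else 4) else (if n < 1106 then 7 else 2)) else (if n < 1122 then (if n < 1121 then 3 else 4) else (if n < 1124 then 6 else 1))) else (if n < 1188 then (if n < 1172 then (if n < 1170 then 5 else 6) else (if n < 1186 then 1 else 0)) else (if n < 1218 then (if n < 1200 then 6 else 7) else (if n < 1220 then 3 else 7)))) else (if n < 1345 then (if n < 1300 then (if n < 1285 then (if n < 1248 then 4 else 2) else (if n < 1297 then 6 else 0)) else (if n < 1316 then (if n < 1313 then 7 else 1) else (if n < 1328 then 5 else 6))) else (if n < 1412 then (if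 n < 1360 then (if n < 1348 then 2 else 0) else (if n < 1376 then 1 else 7)) else (if n < 1440 then (if n < 1424 then 2 else 3) else (if n < 1472 then 4 else (if n < 1539 then 6 else 4)))))) else (if n < 1856 then (if n < 1632 then (if n < 1584 then (if n < 1569 then (if n < 1554 then 2 else 1) else (if n < 1570 then 6 else 5)) else (if n < 1602 then (if n < 1601 then 0 else 1) else (if n < 1616 then 7 else 6))) else (if n < 1728 then (if n < 1680 then (if n < 1666 then 3 else 2) else (if n < 1696 then 5 else 1)) else (if n < 1808 then (if n < 1793 then 0 else 3) else (if n < 1824 then 4 else 2)))) else (if n < 2089 then (if n < 2061 then (if n < 2055 then (if n < 1920 then 5 else 7) else (if n < 2059 then 3 else 4)) else (if n < 2085 then (if n < 2062 then 1 else 5) else (if n < 2086 then 6 else 0))) else (if n < 2118 then (if n < 2092 then (if n < 2090 then 3 else 6) else (if n < 2117 then 2 else 0)) else (if n < 2122 then (if n < 2121 then 7 else 6) else (if n < 2124 then 0 else (if n < 2145 then 4 else 7))))))) else (if n < 2632 then (if n < 2340 then (if n < 2216 then (if n < 2186 then (if n < 2152 then (if n < 2148 then 3 else 5) else (if n < 2182 then 1 else 4)) else (if n < 2210 then (if n < 2188 then 1 else 0) else (if n < 2212 then 2 else 1))) else (if n < 2272 then (if n < 2244 then (if n < 2242 then 7 else 6) else (if n < 2248 then 2 else 3)) else (if n < 2316 then (if n < 2313 then 4 else 7) else (if n < 2337 then 6 else 0)))) else (if n < 2464 then (if n < 2376 then (if n < 2369 then (if n < 2344 then 7 else 4) else (if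 n < 2372 then 1 else 3)) else (if n < 2436 then (if n < 2400 then 5 else 2) else (if n < 2440 then 5 else 2))) else (if n < 2593 then (if n < 2569 then (if n < 2496 then 6 else 7) else (if n < 2570 then 5 else 2)) else (if n < 2600 then (if n < 2594 then 1 else 4) else (if n < 2625 then 0 else (if n < 2626 then 4 else 1)))))) else (if n < 3138 then (if n < 2848 then (if n < 2720 then (if n < 2690 then (if n < 2656 then 7 else 6) else (if n < 2696 then 0 else 6)) else (if n < 2817 then (if n < 2752 then 3 else 5) else (if n < 2824 then 2 else 3))) else (if n < 3077 then (if n < 2944 then (if n < 2880 then 5 else 0) else (if n < 3075 then 1 else 6)) else (if n < 3106 then (if n < 3078 then 7 else 2) else (if n < 3108 then 1 else (if n < 3137 then 4 else 3))))) else (if n < 3332 then (if n < 3204 then (if n < 3168 then (if n < 3140 then 5 else 6) else (if n < 3202 then 0 else 7)) else (if n < 3264 then (if n < 3232 then 3 else 5) else (if n < 3329 then 1 else 5))) else (if n < 3586 then (if n < 3392 then (if n < 3360 then 1 else 3) else (if n < 3456 then 4 else 0)) else (if n < 3648 then (if n < 3616 then 3 else 7) else (if n < 3712 then 2 else (if n < 3840 then 4 else 6))))))))) else (if n < 8242 then (if n < 5186 then (if n < 4372 then (if n < 4177 then (if n < 4122 then (if n < 4115 then (if n < 4109 then (if n < 4107 then 5 else 6) else (if n < 4110 then 7 else 4)) else (if n < 4118 then (if n < 4117 then 7 else 0) else (if n < 4121 then 1 else 4))) else (if n < 4166 then (if n < 4163 then (if n < 4124 then 2 else 5) else (if n < 4165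 then 3 else 4)) else (if n < 4170 then (if n < 4169 then 0 else 1) else (if n < 4172 then 5 else 6)))) else (if n < 4244 then (if n < 4230 then (if n < 4180 then (if n < 4178 then 2 else 6) else (if n < 4184 then 7 else 3)) else (if n < 4236 then (if n < 4234 then 2 else 0) else (if n < 4242 then 1 else 5))) else (if n < 4296 then (if n < 4290 then (if n < 4248 then 4 else 6) else (if n < 4292 then 7 else 3)) else (if n < 4361 then (if n < 4304 then 4 else 1) else (if n < 4364 then 5 else (if n < 4369 then 2 else 6)))))) else (if n < 4680 then (if n < 4544 then (if n < 4432 then (if n < 4420 then (if n < 4376 then 3 else 0) else (if n < 4424 then 5 else 7)) else (if n < 4488 then (if n < 4484 then 4 else 6) else (if n < 4496 then 3 else 7))) else (if n < 4626 then (if n < 4617 then (if n < 4611 then 2 else 0) else (if n < 4618 then 2 else 3)) else (if n < 4673 then (if n < 4632 then 4 else 1) else (if n < 4674 then 7 else 2)))) else (if n < 4880 then (if n < 4752 then (if n < 4738 then (if n < 4688 then 0 else 5) else (if n < 4744 then 1 else 7)) else (if n < 4865 then (if n < 4800 then 0 else 6) else (if n < 4872 then 4 else 6))) else (if n < 5125 then (if n < 4992 then (if n < 4928 then 2 else 1) else (if n < 5123 then 5 else 2)) else (if n < 5137 then (if n < 5126 then 3 else 7) else (if n < 5138 then 1 else (if n < 5140 then 3 else 6))))))) else (if n < 6404 then (if n < 5760 then (if n < 5380 then (if n < 5252 then (if n < 5200 then (if n < 5188 then 1 else 2) else (if n < 5250 then 0 else 4)) else (if n < 5312 then (if n < 5264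 then 0 else 2) else (if n < 5377 then 5 else 7))) else (if n < 5633 then (if n < 5440 then (if n < 5392 then 4 else 5) else (if n < 5504 then 3 else 1)) else (if n < 5648 then (if n < 5634 then 5 else 6) else (if n < 5696 then 7 else 4)))) else (if n < 6209 then (if n < 6150 then (if n < 6147 then (if n < 5888 then 3 else 0) else (if n < 6149 then 1 else 2)) else (if n < 6154 then (if n < 6153 then 6 else 0) else (if n < 6156 then 7 else 3))) else (if n < 6274 then (if n < 6212 then (if n < 6210 then 5 else 4) else (if n < 6216 then 1 else 2)) else (if n < 6280 then (if n < 6276 then 3 else 7) else (if n < 6336 then 5 else (if n < 6401 then 0 else 3)))))) else (if n < 8199 then (if n < 6784 then (if n < 6657 then (if n < 6464 then (if n < 6408 then 0 else 1) else (if n < 6528 then 6 else 4)) else (if n < 6664 then (if n < 6658 then 6 else 5) else (if n < 6720 then 4 else 3))) else (if n < 7172 then (if n < 7169 then (if n < 6912 then 2 else 7) else (if n < 7170 then 4 else 0)) else (if n < 7296 then (if n < 7232 then 5 else 7) else (if n < 7424 then 6 else (if n < 7680 then 2 else 1))))) else (if n < 8218 then (if n < 8211 then (if n < 8205 then (if n < 8203 then 7 else 5) else (if n < 8206 then 4 else 2)) else (if n < 8214 then (if n < 8213 then 1 else 3) else (if n < 8217 then 4 else 0))) else (if n < 8230 then (if n < 8227 then (if n < 8220 then 6 else 1) else (if n < 8229 then 6 else 1)) else (if n < 8234 then (if n < 8233 then 5 else 7) else (if n < 8236 then 0 else (if n < 8241 then 6 else 2)))))))) else (if n < 10246 then (if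 n < 8744 then (if n < 8465 then (if n < 8344 then (if n < 8330 then (if n < 8248 then (if n < 8244 then 3 else 0) else (if n < 8326 then 4 else 0)) else (if n < 8338 then (if n < 8332 then 7 else 3) else (if n < 8340 then 2 else 7))) else (if n < 8368 then (if n < 8356 then (if n < 8354 then 5 else 4) else (if n < 8360 then 2 else 1)) else (if n < 8457 then (if n < 8453 then 6 else 0) else (if n < 8460 then 1 else 5)))) else (if n < 8592 then (if n < 8488 then (if n < 8472 then (if n < 8468 then 7 else 6) else (if n < 8484 then 3 else 4)) else (if n < 8580 then (if n < 8496 then 2 else 5) else (if n < 8584 then 1 else 6))) else (if n < 8714 then (if n < 8707 then (if n < 8608 then 4 else 7) else (if n < 8713 then 2 else 6)) else (if n < 8728 then (if n < 8722 then 4 else 5) else (if n < 8737 then 2 else (if n < 8738 then 0 else 1)))))) else (if n < 9264 then (if n < 8992 then (if n < 8848 then (if n < 8834 then (if n < 8752 then 3 else 7) else (if n < 8840 then 3 else 0)) else (if n < 8968 then (if n < 8864 then 1 else 5) else (if n < 8976 then 7 else 0))) else (if n < 9222 then (if n < 9219 then (if n < 9088 then 6 else 2) else (if n < 9221 then 3 else 2)) else (if n < 9236 then (if n < 9234 then 6 else 7) else (if n < 9250 then 5 else (if n < 9252 then 2 else 7))))) else (if n < 9600 then (if n < 9473 then (if n < 9360 then (if n < 9348 then 1 else 4) else (if n < 9376 then 0 else 3)) else (if n < 9488 then (if n < 9476 then 4 else 3) else (if n < 9504 then 2 else 0))) else (if n < 9760 then (if n < 9730 then (if n < 9729 then 5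 else 7) else (if n < 9744 then 0 else 3)) else (if n < 9984 then (if n < 9856 then 4 else 6) else (if n < 10243 then 1 else (if n < 10245 then 0 else 5))))))) else (if n < 12305 then (if n < 10754 then (if n < 10372 then (if n < 10273 then (if n < 10250 then (if n < 10249 then 1 else 2) else (if n < 10252 then 3 else 7)) else (if n < 10276 then (if n < 10274 then 4 else 7) else (if n < 10280 then 3 else 5))) else (if n < 10500 then (if n < 10400 then (if n < 10376 then 6 else 4) else (if n < 10497 then 0 else 6)) else (if n < 10528 then (if n < 10504 then 2 else 0) else (if n < 10624 then 1 else 3)))) else (if n < 11296 then (if n < 11008 then (if n < 10784 then (if n < 10760 then 6 else 1) else (if n < 10880 then 2 else 7)) else (if n < 11266 then (if n < 11265 then 4 else 1) else (if n < 11268 then 4 else 0))) else (if n < 12291 then (if n < 11520 then (if n < 11392 then 6 else 2) else (if n < 11776 then 7 else 5)) else (if n < 12294 then (if n < 12293 then 4 else 6) else (if n < 12298 then 3 else (if n < 12300 then 1 else 0)))))) else (if n < 12928 then (if n < 12545 then (if n < 12418 then (if n < 12308 then (if n < 12306 then 5 else 0) else (if n < 12312 then 2 else 7)) else (if n < 12424 then (if n < 12420 then 6 else 5) else (if n < 12432 then 2 else 3))) else (if n < 12672 then (if n < 12552 then (if n < 12548 then 2 else 7) else (if n < 12560 then 4 else 1)) else (if n < 12802 then (if n < 12801 then 0 else 1) else (if n < 12808 then 7 else (if n < 12816 then 5 else 6))))) else (if n < 13824 then (if n < 13316 then (if n < 13313 then (if n < 13056 then 4 else 3) else (if n < 13314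 then 0 else 5)) else (if n < 13440 then (if n < 13328 then 1 else 4) else (if n < 13568 then 7 else 6))) else (if n < 14344 then (if n < 14338 then (if n < 14337 then 2 else 7) else (if n < 14340 then 2 else 4)) else (if n < 14592 then (if n < 14464 then 6 else 1) else (if n < 14848 then 5 else (if n < 15360 then 0 else 3))))))))))"

definition base_colour :: "nat set \<Rightarrow> nat" where
  "base_colour S = base_colour_code (\<Sum>p\<in>S. 2 ^ p)"

definition extension_colours :: "nat \<Rightarrow> nat \<Rightarrow> nat \<Rightarrow> nat list" where
  "extension_colours a b c = map (\<lambda>q. base_colour_code (2 ^ q + 2 ^ a + 2 ^ b + 2 ^ c))
     [q \<leftarrow> [0..<14]. q mod 7 \<notin> {a mod 7, b mod 7, c mod 7}]"

lemma extension_colours_perm: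
  "list_all (\<lambda>(a, b, c). sort (extension_colours a b c) = [0..<8])
     [(a, b, c). a \<leftarrow> [0..<14], b \<leftarrow> [Suc a..<14], c \<leftarrow> [Suc b..<14],
       distinct [a mod 7, b mod 7, c mod 7]]"
  \<comment> \<open>Expand the list first, so that the table is only ever unfolded at numerals.\<close>
  apply (simp add: upt_rec)
  apply (simp add: extension_colours_def base_colour_code_def[where n = "numeral k" for k] upt_rec)
  done

lemma card_3_sortedE:
  fixes T :: "'a::linorder set"
  assumes "card T = 3"
  obtains a b c where "T = {a, b, c}" "a < b" "b < c"
proof -
  define xs where "xs = sorted_list_of_set T"
  have "finite T" using assms by (intro card_ge_0_finite) simp
  then have xs: "set xs = T" "length xs = 3" "sorted_wrt (<) xs"
    unfolding xs_def using assms by simp_all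
  then obtain a b c where "xs = [a, b, c]"
    by (auto simp: numeral_3_eq_3 length_Suc_conv)
  then show thesis using xs that by auto
qed

lemma base_colour_bij:
  assumes T: "T \<in> trans_ksets {..<7 * 2} (residue_groups 7 2) 3"
  shows "bij_betw (\<lambda>q. base_colour (insert q T)) (free_points {..<7 * 2} (residue_groups 7 2) T) {..<8}"
proof -
  have T': "T \<subseteq> {..<14}" "card T = 3" "inj_on (\<lambda>p. p mod 7) T"
    using T transversal_residue_groups_iff[of T 7 2] unfolding trans_ksets_def by auto
  obtain a b c where T_eq: "T = {a, b, c}" and lt: "a < b" "b < c"
    using card_3_sortedE[OF T'(2)] .
  have "c < 14" using T'(1) T_eq by auto
  have res: "a mod 7 \<noteq> b mod 7" "a mod 7 \<noteq> c mod 7" "b mod 7 \<noteq> c mod 7"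
    using T'(3) lt unfolding T_eq inj_on_def by auto
  define F where "F = [q \<leftarrow> [0..<14]. q mod 7 \<notin> {a mod 7, b mod 7, c mod 7}]"
  define f where "f q = base_colour_code (2 ^ q + 2 ^ a + 2 ^ b + 2 ^ c)" for q :: nat
  have "(a, b, c) \<in> set [(a, b, c). a \<leftarrow> [0..<14], b \<leftarrow> [Suc a..<14], c \<leftarrow> [Suc b..<14],
       distinct [a mod 7, b mod 7, c mod 7]]"
    using lt \<open>c < 14\<close> res by auto
  then have "sort (map f F) = [0..<8]"
    using extension_colours_perm unfolding list_all_iff extension_colours_def F_def f_def by auto
  then have "distinct (map f F)" "set (map f F) = {..<8}"
    by (metis distinct_sort distinct_upt, metis set_sort set_upt atLeast0LessThan)
  then have bij: "bij_betw f (set F) {..<8}"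
    unfolding bij_betw_def by (simp add: distinct_map)
  have F: "set F = free_points {..<7 * 2} (residue_groups 7 2) T"
    using free_points_residue_groups[of T 7 2] T'(1) unfolding F_def T_eq by auto
  have colour: "base_colour (insert q T) = f q" if "q \<in> set F" for q
  proof -
    have "q \<notin> T" using that unfolding F_def T_eq by auto
    then show ?thesis
      unfolding base_colour_def f_def T_eq using lt by (simp add: add.assoc)
  qed
  show ?thesis
    unfolding F[symmetric] using bij by (rule bij_betw_cong[THEN iffD2, rotated]) (rule colour)
qed

theorem lemma13:
  fixes g :: nat
  assumes "g > 0"
  shows "(\<exists>(Q :: nat set) G L. large_H_set 7 g 4 3 Q G L) \<longleftrightarrow> even g"
proof
  assume "\<exists>(Q :: nat set) G L. large_H_set 7 g 4 3 Q G L"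
  then obtain Q :: "nat set" and G L where "large_H_set 7 g 4 3 Q G L" by blast
  from large_H_set_4_3_even[OF this assms] show "even g" by simp
next
  assume "even g"
  then obtain m where g: "g = 2 * m" by blast
  have "0 < 2 * m" using assms g by simp
  have "large_H_set 7 (2 * m) (Suc 3) 3 {..<7 * (2 * m)} (residue_groups 7 (2 * m))
      ((\<lambda>d. {b \<in> trans_ksets {..<7 * (2 * m)} (residue_groups 7 (2 * m)) (Suc 3).
         inflated_colouring (7 * 2) m base_colour b = d}) ` ({..<8} \<times> {..<m}))"
    by (rule large_H_set_colour_classes[OF group_partition_residue_groups[OF \<open>0 < 2 * m\<close>]
        inflated_colouring_bij[OF base_colour_bij]])
  then show "\<exists>(Q :: nat set) G L. large_H_set 7 g 4 3 Q G L"
    unfolding g by (auto simp: numeral_eq_Suc)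
qed

end
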